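(* Let $f$ be a polynomial with integer coefficients of degree $r\ge3$ with positive leading coefficient, positive and strictly increasing on $[0,\infty)$, and let $g_N(x)=f'(x)\left(1-\frac{f(x)}{f(N)}\right)\big/\int_0^N f'(t)\left(1-\frac{f(t)}{f(N)}\right)dt$. Let $\mathcal{I}_N=\bigcup_{a\in\mathbb{Z}}[a-N^{-r+\frac1r},a+N^{-r+\frac1r}]$. Then \[ \liminf_{N\to\infty}\inf_{\alpha\in\mathcal{I}_N}\sum_{j=1}^N g_N(j)\left[e(\alpha f(j))+e(-\alpha f(j))\right]\ge0. \]
   Context: $e(\alpha)=e^{2\pi i\alpha}$. *)

theory Defs
  imports "HOL-Analysis.Analysis" "HOL-Computational_Algebra.Polynomial" "HOL-Library.Liminf_Limsup"
begin

definition e :: "real \<Rightarrow> complex" where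
  "e \<alpha> = exp (2 * of_real pi * \<i> * of_real \<alpha>)"

definition fR :: "int poly \<Rightarrow> real \<Rightarrow> real" where
  "fR f x = poly (map_poly real_of_int f) x"

definition fR' :: "int poly \<Rightarrow> real \<Rightarrow> real" where
  "fR' f x = poly (pderiv (map_poly real_of_int f)) x"

definition gN :: "int poly \<Rightarrow> nat \<Rightarrow> real \<Rightarrow> real" where
  "gN f N x = fR' f x * (1 - fR f x / fR f (real N)) /
     integral {0..real N} (\<lambda>t. fR' f t * (1 - fR f t / fR f (real N)))"

definition IN :: "nat \<Rightarrow> nat \<Rightarrow> real set" where
  "IN r N = (\<Union>a::int. {real_of_int a - real N powr (- real r + 1 / real r) ..
                         real_of_int a + real N powr (- real r + 1 / real r)})"

end

theory Submission
  imports Defs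
begin

(*
  Write \<alpha> = a + \<beta> with a integer and |\<beta>| \<le> N powr (-r + 1/r). As f(j) is an integer, the
  real part of the sum equals 2/Z * \<Sum> w(j) cos(\<theta> f(j)) with \<theta> = 2 pi \<beta>, the weight
  w = f' (1 - f / f(N)) and Z its integral over [0, N], which is (f(N) - f(0))^2 / (2 f(N)),
  of order N^r. The sum differs from the integral of w(x) cos(\<theta> f(x)) by at most N times a
  bound for the derivative of this function, i.e. by O(N^(r-1) + |\<theta>| N^(2r-1)). The
  substitution u = f(x) turns that integral into the integral of (1 - u/f(N)) cos(\<theta> u) over
  [f(0), f(N)], which is at least -2 f(0) for every \<theta>. Dividing by Z leaves a lower bound
  -O(1/N + N^(1/r - 1)), uniform in \<alpha>, that tends to 0.
*)

definition l1_coeff_norm :: "real poly \<Rightarrow> real" where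
  "l1_coeff_norm p = (\<Sum>i\<le>degree p. \<bar>coeff p i\<bar>)"

lemma l1_coeff_norm_nonneg: "0 \<le> l1_coeff_norm p"
  unfolding l1_coeff_norm_def by (intro sum_nonneg) auto

lemma abs_poly_le_l1_coeff_norm:
  fixes p :: "real poly"
  assumes "degree p \<le> k" "1 \<le> n" "\<bar>x\<bar> \<le> n"
  shows "\<bar>poly p x\<bar> \<le> l1_coeff_norm p * n ^ k"
proof -
  have "\<bar>poly p x\<bar> = \<bar>\<Sum>i\<le>degree p. coeff p i * x ^ i\<bar>" by (simp add: poly_altdef)
  also have "\<dots> \<le> (\<Sum>i\<le>degree p. \<bar>coeff p i\<bar> * n ^ k)"
  proof (rule order.trans[OF sum_abs sum_mono])
    fix i assume "i \<in> {..degree p}"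
    have "\<bar>x\<bar> ^ i \<le> n ^ i" using assms by (intro power_mono) auto
    also have "n ^ i \<le> n ^ k" using assms \<open>i \<in> {..degree p}\<close> by (intro power_increasing) auto
    finally show "\<bar>coeff p i * x ^ i\<bar> \<le> \<bar>coeff p i\<bar> * n ^ k"
      by (simp add: abs_mult power_abs mult_left_mono)
  qed
  also have "\<dots> = l1_coeff_norm p * n ^ k" by (simp add: l1_coeff_norm_def sum_distrib_right)
  finally show ?thesis .
qed

lemma eventually_poly_ge_half_lead_power:
  fixes p :: "real poly"
  assumes "lead_coeff p > 0"
  shows "eventually (\<lambda>x. lead_coeff p / 2 * x ^ degree p \<le> poly p x) at_top"
proof (cases "degree p = 0")
  case True
  then show ?thesis using assms by (auto elim: degree_eq_zeroE)
next
  case False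
  define k where "k = degree p"
  define c where "c = lead_coeff p"
  define R where "R = p - monom c k"
  have degR: "degree R \<le> k - 1"
  proof (rule degree_le, intro allI impI)
    fix i assume "k - 1 < i"
    then show "coeff R i = 0"
      using False by (cases "i = k") (auto simp: R_def c_def k_def coeff_eq_0)
  qed
  have "c / 2 * x ^ k \<le> poly p x" if x: "max 1 (2 * l1_coeff_norm R / c) \<le> x" for x
  proof -
    have "\<bar>poly R x\<bar> \<le> l1_coeff_norm R * x ^ (k - 1)"
      using x by (intro abs_poly_le_l1_coeff_norm[OF degR]) auto
    also have "\<dots> \<le> c / 2 * x * x ^ (k - 1)"
      using x assms by (intro mult_right_mono) (auto simp: c_def field_simps)
    also have "\<dots> = c / 2 * x ^ k"
      using False by (simp add: k_def power_eq_if)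
    finally have "\<bar>poly p x - c * x ^ k\<bar> \<le> c / 2 * x ^ k"
      by (simp add: R_def poly_monom)
    then show ?thesis unfolding abs_le_iff by linarith
  qed
  then show ?thesis unfolding eventually_at_top_linorder c_def k_def by blast
qed

lemma integral_le_right_value_plus_deriv_bound:
  fixes h h' :: "real \<Rightarrow> real"
  assumes der: "\<And>x. (h has_real_derivative h' x) (at x)"
    and bound: "\<And>x. a \<le> x \<Longrightarrow> x \<le> a + 1 \<Longrightarrow> \<bar>h' x\<bar> \<le> B"
  shows "integral {a..a + 1} h \<le> h (a + 1) + B"
proof -
  have "h x \<le> h (a + 1) + B" if x: "x \<in> {a..a + 1}" for x
  proof -
    have "\<bar>h (a + 1) - h x\<bar> \<le> B * \<bar>a + 1 - x\<bar>"
      using field_differentiable_bound[of "{a..a + 1}" h h' B "a + 1" x] x bound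
      by (auto intro: has_field_derivative_at_within der)
    also have "\<dots> \<le> B" using x bound[of a] by (intro mult_left_le) auto
    finally show ?thesis by linarith
  qed
  moreover have "continuous_on {a..a + 1} h"
    using der by (meson DERIV_isCont continuous_at_imp_continuous_on)
  ultimately have "integral {a..a + 1} h \<le> integral {a..a + 1} (\<lambda>_. h (a + 1) + B)"
    by (intro integral_le integrable_continuous_real) auto
  then show ?thesis by simp
qed

lemma sum_ge_integral_minus_deriv_bound:
  fixes h h' :: "real \<Rightarrow> real" and N :: nat
  assumes der: "\<And>x. (h has_real_derivative h' x) (at x)"
    and bound: "\<And>x. 0 \<le> x \<Longrightarrow> x \<le> real N \<Longrightarrow> \<bar>h' x\<bar> \<le> B"
  shows "integral {0..real N} h - real N * B \<le> (\<Sum>j=1..N. h (real j))"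
  using bound
proof (induction N)
  case 0
  then show ?case by simp
next
  case (Suc N)
  have "integral {real N..real N + 1} h \<le> h (real N + 1) + B"
    using Suc.prems by (intro integral_le_right_value_plus_deriv_bound[OF der]) auto
  moreover have "integral {0..real N} h + integral {real N..real N + 1} h = integral {0..real N + 1} h"
    using der by (intro Henstock_Kurzweil_Integration.integral_combine integrable_continuous_real
        continuous_at_imp_continuous_on ballI DERIV_isCont) auto
  moreover have "integral {0..real N} h - real N * B \<le> (\<Sum>j=1..N. h (real j))"
    using Suc by simp
  ultimately show ?case by (simp add: algebra_simps)
qed

lemma one_minus_cos_le: "1 - cos x \<le> x\<^sup>2 / (2 :: real)"
proof -
  have "cos x = 1 - 2 * sin (x / 2) ^ 2" using cos_double_sin[of "x / 2"] by simp
  moreover have "sin (x / 2) ^ 2 \<le> (x / 2) ^ 2"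
    using abs_sin_x_le_abs_x[of "x / 2"] by (metis abs_ge_zero power2_abs power_mono)
  ultimately show ?thesis by (simp add: power_divide)
qed

definition cos_primitive :: "real \<Rightarrow> real \<Rightarrow> real \<Rightarrow> real" where
  "cos_primitive M \<theta> u = (if \<theta> = 0 then u - u\<^sup>2 / (2 * M)
     else (1 - u / M) * sin (\<theta> * u) / \<theta> - cos (\<theta> * u) / (\<theta>\<^sup>2 * M))"

lemma has_real_derivative_cos_primitive:
  assumes "M \<noteq> 0"
  shows "(cos_primitive M \<theta> has_real_derivative (1 - u / M) * cos (\<theta> * u)) (at u)"
proof (cases "\<theta> = 0")
  case True
  then show ?thesis unfolding cos_primitive_def using assms
    by (auto intro!: derivative_eq_intros simp: field_simps power2_eq_square)
next
  case False
  have "((\<lambda>u. (1 - u / M) * sin (\<theta> * u) / \<theta> - cos (\<theta> * u) / (\<theta>\<^sup>2 * M))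
      has_real_derivative (1 - u / M) * cos (\<theta> * u)) (at u)"
    using False assms by (auto intro!: derivative_eq_intros simp: field_simps power2_eq_square)
  then show ?thesis unfolding cos_primitive_def using False by simp
qed

lemma cos_primitive_diff_ge:
  assumes "0 < u" "u \<le> M"
  shows "- 2 * u \<le> cos_primitive M \<theta> M - cos_primitive M \<theta> u"
proof (cases "\<theta> = 0")
  case True
  then have "cos_primitive M \<theta> M - cos_primitive M \<theta> u = (M - u)\<^sup>2 / (2 * M)"
    using assms by (simp add: cos_primitive_def field_simps power2_eq_square)
  moreover have "0 \<le> (M - u)\<^sup>2 / (2 * M)" using assms by simp
  ultimately show ?thesis using assms by linarith
next
  case False
  have M: "0 < M" using assms by simp
  have diff: "cos_primitive M \<theta> M - cos_primitive M \<theta> u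
      = (cos (\<theta> * u) - cos (\<theta> * M)) / (\<theta>\<^sup>2 * M) - (1 - u / M) * (sin (\<theta> * u) / \<theta>)"
    using False M by (simp add: cos_primitive_def field_simps)
  have "u * (u / M) \<le> u"
    using assms M by (intro mult_left_le) auto
  then have "- u / 2 \<le> - ((\<theta> * u)\<^sup>2 / 2) / (\<theta>\<^sup>2 * M)"
    using False M by (simp add: field_simps power2_eq_square)
  also have "\<dots> \<le> (cos (\<theta> * u) - cos (\<theta> * M)) / (\<theta>\<^sup>2 * M)"
  proof (intro divide_right_mono)
    show "- ((\<theta> * u)\<^sup>2 / 2) \<le> cos (\<theta> * u) - cos (\<theta> * M)"
      using one_minus_cos_le[of "\<theta> * u"] cos_le_one[of "\<theta> * M"] by linarith
  qed (use M in auto)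
  finally have "- u / 2 \<le> (cos (\<theta> * u) - cos (\<theta> * M)) / (\<theta>\<^sup>2 * M)" .
  moreover have "(1 - u / M) * (sin (\<theta> * u) / \<theta>) \<le> u"
  proof -
    have "\<bar>sin (\<theta> * u) / \<theta>\<bar> \<le> u"
      using abs_sin_x_le_abs_x[of "\<theta> * u"] False assms
      by (simp add: abs_mult divide_le_eq pos_divide_le_eq mult.commute)
    moreover have "\<bar>1 - u / M\<bar> \<le> 1" using assms M by auto
    ultimately have "\<bar>1 - u / M\<bar> * \<bar>sin (\<theta> * u) / \<theta>\<bar> \<le> 1 * u"
      by (intro mult_mono) auto
    then show ?thesis by (metis abs_le_D1 abs_mult mult_1)
  qed
  ultimately show ?thesis using diff assms by linarith
qed

definition weight :: "real poly \<Rightarrow> real \<Rightarrow> real \<Rightarrow> real" where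
  "weight F M t = poly (pderiv F) t * (1 - poly F t / M)"

lemma has_integral_weight_cos:
  assumes "M \<noteq> 0" "a \<le> b"
  shows "((\<lambda>x. weight F M x * cos (\<theta> * poly F x)) has_integral
           cos_primitive M \<theta> (poly F b) - cos_primitive M \<theta> (poly F a)) {a..b}"
proof -
  have "((\<lambda>x. cos_primitive M \<theta> (poly F x)) has_real_derivative
      weight F M x * cos (\<theta> * poly F x)) (at x)" for x
    using DERIV_chain2[OF has_real_derivative_cos_primitive[OF assms(1)] poly_DERIV[of F x]]
    by (simp add: weight_def mult_ac)
  then show ?thesis
    using assms(2) by (intro fundamental_theorem_of_calculus)
      (auto simp: has_real_derivative_iff_has_vector_derivative[symmetric]
        intro: has_field_derivative_at_within)
qed

lemma integral_weight:
  assumes "M = poly F b" "M \<noteq> 0" "a \<le> b"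
  shows "integral {a..b} (weight F M) = (M - poly F a)\<^sup>2 / (2 * M)"
proof -
  have "(weight F M has_integral cos_primitive M 0 M - cos_primitive M 0 (poly F a)) {a..b}"
    using has_integral_weight_cos[of M a b F 0] assms by simp
  then show ?thesis
    using assms(2) by (simp add: integral_unique cos_primitive_def field_simps power2_eq_square)
qed

lemma weight_cos_sum_lower_bound:
  fixes F :: "real poly" and N :: nat and M A1 A2 \<theta> :: real
  assumes M: "M = poly F (real N)"
    and pos: "\<And>x. 0 \<le> x \<Longrightarrow> 0 < poly F x"
    and mono: "\<And>x. 0 \<le> x \<Longrightarrow> x \<le> real N \<Longrightarrow> poly F x \<le> M"
    and M_ge: "4 * poly F 0 \<le> M"
    and A1: "\<And>x. 0 \<le> x \<Longrightarrow> x \<le> real N \<Longrightarrow> \<bar>poly (pderiv F) x\<bar> \<le> A1"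
    and A2: "\<And>x. 0 \<le> x \<Longrightarrow> x \<le> real N \<Longrightarrow> \<bar>poly (pderiv (pderiv F)) x\<bar> \<le> A2"
  shows "- 8 / M * (2 * poly F 0 + real N * (A2 + A1\<^sup>2 / M + \<bar>\<theta>\<bar> * A1\<^sup>2))
    \<le> 2 / integral {0..real N} (weight F M) *
        (\<Sum>j=1..N. weight F M (real j) * cos (\<theta> * poly F (real j)))"
proof -
  define f0 where "f0 = poly F 0"
  define B where "B = A2 + A1\<^sup>2 / M + \<bar>\<theta>\<bar> * A1\<^sup>2"
  define X where "X = 2 * f0 + real N * B"
  define Z where "Z = integral {0..real N} (weight F M)"
  define h where "h x = weight F M x * cos (\<theta> * poly F x)" for x
  define w' where "w' x = poly (pderiv (pderiv F)) x * (1 - poly F x / M) - (poly (pderiv F) x)\<^sup>2 / M"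
    for x
  define h' where "h' x = w' x * cos (\<theta> * poly F x)
      - \<theta> * (weight F M x * poly (pderiv F) x) * sin (\<theta> * poly F x)" for x
  have f0: "0 < f0" "f0 \<le> M" using pos[of 0] M_ge by (auto simp: f0_def)
  then have "0 < M" by linarith
  have der: "(h has_real_derivative h' x) (at x)" for x
    unfolding h_def h'_def w'_def weight_def using \<open>0 < M\<close>
    by (auto intro!: derivative_eq_intros simp: field_simps power2_eq_square)
  have "\<bar>h' x\<bar> \<le> B" if x: "0 \<le> x" "x \<le> real N" for x
  proof -
    have u: "0 \<le> 1 - poly F x / M" "1 - poly F x / M \<le> 1"
      using pos[OF x(1)] mono[OF x] \<open>0 < M\<close> by auto
    have "\<bar>poly (pderiv (pderiv F)) x * (1 - poly F x / M)\<bar> \<le> A2 * 1"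
      using A2[OF x] u unfolding abs_mult by (intro mult_mono) auto
    moreover have "(poly (pderiv F) x)\<^sup>2 / M \<le> A1\<^sup>2 / M"
      using A1[OF x] power_mono[of "\<bar>poly (pderiv F) x\<bar>" A1 2] \<open>0 < M\<close>
      by (intro divide_right_mono) auto
    moreover have "0 \<le> (poly (pderiv F) x)\<^sup>2 / M" using \<open>0 < M\<close> by simp
    ultimately have w': "\<bar>w' x\<bar> \<le> A2 + A1\<^sup>2 / M"
      unfolding w'_def by linarith
    have w: "\<bar>weight F M x * poly (pderiv F) x\<bar> \<le> A1 * 1 * A1"
      using A1[OF x] u unfolding weight_def abs_mult by (intro mult_mono) auto
    have "\<bar>h' x\<bar> \<le> \<bar>w' x\<bar> * \<bar>cos (\<theta> * poly F x)\<bar>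
        + \<bar>\<theta>\<bar> * \<bar>weight F M x * poly (pderiv F) x\<bar> * \<bar>sin (\<theta> * poly F x)\<bar>"
      unfolding h'_def abs_mult[symmetric] by (rule abs_triangle_ineq4)
    also have "\<dots> \<le> (A2 + A1\<^sup>2 / M) * 1 + \<bar>\<theta>\<bar> * (A1 * 1 * A1) * 1"
      using w w' by (intro add_mono mult_mono) auto
    finally show ?thesis by (simp add: B_def power2_eq_square)
  qed
  then have "integral {0..real N} h - real N * B \<le> (\<Sum>j=1..N. h (real j))"
    by (rule sum_ge_integral_minus_deriv_bound[OF der])
  moreover have "- 2 * f0 \<le> integral {0..real N} h"
  proof -
    have "(h has_integral cos_primitive M \<theta> M - cos_primitive M \<theta> f0) {0..real N}"
      using has_integral_weight_cos[of M 0 "real N" F \<theta>] \<open>0 < M\<close>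
      by (simp add: h_def[abs_def] M f0_def)
    then show ?thesis using cos_primitive_diff_ge[OF f0] by (simp add: integral_unique)
  qed
  ultimately have sum: "- X \<le> (\<Sum>j=1..N. h (real j))" unfolding X_def by linarith
  have "(3 / 4 * M)\<^sup>2 \<le> (M - f0)\<^sup>2" using M_ge f0 by (intro power_mono) (auto simp: f0_def)
  then have "M / 4 \<le> Z"
    unfolding Z_def using integral_weight[OF M] \<open>0 < M\<close>
    by (simp add: f0_def pos_le_divide_eq power2_eq_square)
      (use zero_le_square[of M] in linarith)
  then have "2 / Z \<le> 8 / M" "0 < Z" using \<open>0 < M\<close> by (auto simp: field_simps)
  moreover have "0 \<le> X"
    using f0 A2[of 0] \<open>0 < M\<close> by (auto simp: X_def B_def)
  ultimately have "- 8 / M * X \<le> 2 / Z * (- X)"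
    using mult_right_mono[of "2 / Z" "8 / M" X] by simp
  also have "\<dots> \<le> 2 / Z * (\<Sum>j=1..N. h (real j))"
    using sum \<open>0 < Z\<close> by (intro mult_left_mono) auto
  finally show ?thesis by (simp add: X_def B_def Z_def h_def f0_def)
qed

lemma e_add_of_int: "e (x + of_int n) = e x"
proof -
  have "exp (2 * of_real pi * \<i> * of_int n) = 1"
    using exp_integer_2pi[of "of_int n"] by (simp add: mult_ac)
  then show ?thesis unfolding e_def by (simp add: distrib_left exp_add)
qed

lemma Re_e: "Re (e x) = cos (2 * pi * x)"
  unfolding e_def by (simp add: Re_exp)

lemma fR_of_int: "fR f (of_int k) = of_int (poly f k)"
  unfolding fR_def by (induct f) (auto simp: map_poly_pCons)

lemma Re_exp_sum_eq_weight_cos_sum: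
  fixes f :: "int poly" and a :: int
  defines "F \<equiv> map_poly real_of_int f"
  shows "Re (\<Sum>j=1..N. complex_of_real (gN f N (real j)) *
             (e (\<alpha> * fR f (real j)) + e (- \<alpha> * fR f (real j))))
    = 2 / integral {0..real N} (weight F (poly F (real N))) *
      (\<Sum>j=1..N. weight F (poly F (real N)) (real j) *
                 cos (2 * pi * (\<alpha> - of_int a) * poly F (real j)))"
proof -
  have fR_F: "fR f = poly F" by (simp add: fR_def F_def fun_eq_iff)
  have Re_e_fR: "Re (e (\<alpha> * fR f (real j))) = cos (2 * pi * (\<alpha> - of_int a) * poly F (real j))"
    for \<alpha> j
  proof -
    obtain k where k: "fR f (real j) = of_int k" using fR_of_int[of f "int j"] by auto
    have "e (\<alpha> * fR f (real j)) = e ((\<alpha> - of_int a) * of_int k + of_int (a * k))"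
      by (simp add: k algebra_simps)
    also have "\<dots> = e ((\<alpha> - of_int a) * of_int k)" by (rule e_add_of_int)
    finally show ?thesis by (simp add: Re_e k fR_F[symmetric] mult_ac)
  qed
  have "gN f N x = weight F (poly F (real N)) x / integral {0..real N} (weight F (poly F (real N)))"
    for x unfolding gN_def weight_def fR_F fR'_def F_def ..
  moreover have "Re (e (- \<alpha> * fR f (real j))) = Re (e (\<alpha> * fR f (real j)))" for j
    unfolding Re_e by simp
  ultimately show ?thesis
    by (simp add: Re_e_fR sum_distrib_left mult_ac)
qed

lemma error_term_le:
  fixes n M f0 K1 K2 \<theta> :: real and r :: nat
  assumes n: "1 \<le> n" and r: "2 \<le> r" and M: "n ^ r \<le> 2 * M"
    and nonneg: "0 \<le> f0" "0 \<le> K1" "0 \<le> K2"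
    and \<theta>: "\<bar>\<theta>\<bar> \<le> 2 * pi * n powr (- real r + 1 / real r)"
  shows "8 / M * (2 * f0 + n * (K2 * n ^ (r - 2) + (K1 * n ^ (r - 1))\<^sup>2 / M
            + \<bar>\<theta>\<bar> * (K1 * n ^ (r - 1))\<^sup>2))
    \<le> (32 * f0 + 16 * K2 + 32 * K1\<^sup>2) / n + 32 * pi * K1\<^sup>2 * n powr (1 / real r - 1)"
proof -
  obtain k where k: "r = k + 2" using r by (metis add.commute le_Suc_ex)
  define A where "A = (K1 * n ^ (r - 1))\<^sup>2"
  define \<delta> where "\<delta> = n powr (- real r + 1 / real r)"
  have "0 < n ^ r" using n by simp
  then have iM: "0 < 1 / M" "1 / M \<le> 2 / n ^ r" using M by (auto simp: field_simps)
  have "8 / M * (2 * f0 + n * (K2 * n ^ (r - 2) + A / M + \<bar>\<theta>\<bar> * A))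
      = 8 * (1 / M) * (2 * f0 + n * (K2 * n ^ (r - 2) + A * (1 / M) + \<bar>\<theta>\<bar> * A))"
    by simp
  also have "\<dots> \<le> 8 * (2 / n ^ r) * (2 * f0 + n * (K2 * n ^ (r - 2) + A * (2 / n ^ r) + 2 * pi * \<delta> * A))"
    using iM \<theta> n nonneg
    by (intro mult_mono add_mono mult_left_mono mult_right_mono order_refl add_nonneg_nonneg
        mult_nonneg_nonneg) (auto simp: A_def \<delta>_def)
  also have "\<dots> = 32 * f0 / n ^ r + (16 * K2 + 32 * K1\<^sup>2) / n + 32 * pi * K1\<^sup>2 * (\<delta> * n ^ (r - 1))"
    using n by (simp add: k A_def field_simps power2_eq_square)
  also have "\<delta> * n ^ (r - 1) = n powr (1 / real r - 1)"
    using n r by (simp add: \<delta>_def powr_realpow[symmetric] powr_add[symmetric])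
  also have "32 * f0 / n ^ r \<le> 32 * f0 / n"
    using n nonneg r by (intro divide_left_mono) (auto intro: order.trans[OF _ power_increasing[of 1 r n]])
  finally show ?thesis by (simp add: A_def add_divide_distrib)
qed

lemma liminf_INF_nonneg_of_uniform_bound:
  fixes s :: "nat \<Rightarrow> 'a \<Rightarrow> real" and E :: "nat \<Rightarrow> real"
  assumes "E \<longlonglongrightarrow> 0" and "eventually (\<lambda>N. \<forall>\<alpha>\<in>A N. - E N \<le> s N \<alpha>) sequentially"
  shows "0 \<le> liminf (\<lambda>N. INF \<alpha>\<in>A N. ereal (s N \<alpha>))"
proof -
  have "0 = liminf (\<lambda>N. ereal (- E N))"
    using assms(1) by (intro lim_imp_Liminf[symmetric]) (auto intro: tendsto_eq_intros)
  also have "\<dots> \<le> liminf (\<lambda>N. INF \<alpha>\<in>A N. ereal (s N \<alpha>))"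
    using assms(2) by (intro Liminf_mono) (auto elim!: eventually_mono intro: INF_greatest)
  finally show ?thesis .
qed

lemma eventually_power_le_twice_poly:
  fixes p :: "real poly"
  assumes "1 \<le> lead_coeff p"
  shows "eventually (\<lambda>x. x ^ degree p \<le> 2 * poly p x) at_top"
proof -
  have "eventually (\<lambda>x. lead_coeff p / 2 * x ^ degree p \<le> poly p x) at_top"
    using assms by (intro eventually_poly_ge_half_lead_power) auto
  then show ?thesis using eventually_ge_at_top[of 0]
  proof eventually_elim
    case (elim x)
    then have "x ^ degree p \<le> lead_coeff p * x ^ degree p"
      using assms by (simp add: mult_le_cancel_right1)
    with elim show ?case by linarith
  qed
qed

lemma exp_sum_lower_bound:
  fixes f :: "int poly" and N r :: nat
  defines "F \<equiv> map_poly real_of_int f"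
  defines "K1 \<equiv> l1_coeff_norm (pderiv F)" and "K2 \<equiv> l1_coeff_norm (pderiv (pderiv F))"
  assumes deg: "degree f = r" and r: "2 \<le> r"
    and pos: "\<forall>x\<ge>0. 0 < fR f x" and mono: "strict_mono_on {0..} (fR f)"
    and N: "1 \<le> real N" "8 * fR f 0 \<le> real N" "real N ^ r \<le> 2 * fR f (real N)"
    and \<alpha>: "\<alpha> \<in> IN r N"
  shows "- ((32 * fR f 0 + 16 * K2 + 32 * K1\<^sup>2) / real N
            + 32 * pi * K1\<^sup>2 * real N powr (1 / real r - 1))
    \<le> Re (\<Sum>j=1..N. complex_of_real (gN f N (real j)) *
             (e (\<alpha> * fR f (real j)) + e (- \<alpha> * fR f (real j))))"
proof -
  define n where "n = real N"
  define M where "M = poly F n"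
  define A1 where "A1 = K1 * n ^ (r - 1)"
  define A2 where "A2 = K2 * n ^ (r - 2)"
  have fR_F: "fR f = poly F" by (simp add: fR_def F_def fun_eq_iff)
  have degF: "degree F = r" using deg by (simp add: F_def degree_map_poly)
  obtain a :: int where a: "\<bar>\<alpha> - of_int a\<bar> \<le> n powr (- real r + 1 / real r)"
    using \<alpha> unfolding IN_def n_def by (auto simp: abs_le_iff algebra_simps)
  define \<theta> where "\<theta> = 2 * pi * (\<alpha> - of_int a)"
  have "n ^ 1 \<le> n ^ r" using N r by (intro power_increasing) (auto simp: n_def)
  then have "4 * poly F 0 \<le> M"
    using N[folded n_def] unfolding M_def fR_F power_one_right by linarith
  moreover have "poly F x \<le> M" if "0 \<le> x" "x \<le> n" for x
    using strict_mono_on_leD[OF mono, of x n] that N by (simp add: M_def fR_F n_def)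
  moreover have "\<bar>poly (pderiv F) x\<bar> \<le> A1" if "0 \<le> x" "x \<le> n" for x
    unfolding A1_def K1_def using that N
    by (intro abs_poly_le_l1_coeff_norm) (auto simp: degree_pderiv degF n_def)
  moreover have "\<bar>poly (pderiv (pderiv F)) x\<bar> \<le> A2" if "0 \<le> x" "x \<le> n" for x
    unfolding A2_def K2_def using that N
    by (intro abs_poly_le_l1_coeff_norm) (auto simp: degree_pderiv degF n_def)
  ultimately have "- 8 / M * (2 * poly F 0 + n * (A2 + A1\<^sup>2 / M + \<bar>\<theta>\<bar> * A1\<^sup>2))
    \<le> 2 / integral {0..n} (weight F M) * (\<Sum>j=1..N. weight F M (real j) * cos (\<theta> * poly F (real j)))"
    using pos unfolding n_def by (intro weight_cos_sum_lower_bound) (auto simp: M_def fR_F n_def)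
  moreover have "8 / M * (2 * poly F 0 + n * (A2 + A1\<^sup>2 / M + \<bar>\<theta>\<bar> * A1\<^sup>2))
    \<le> (32 * poly F 0 + 16 * K2 + 32 * K1\<^sup>2) / n + 32 * pi * K1\<^sup>2 * n powr (1 / real r - 1)"
    unfolding A1_def A2_def using N r pos a
    by (intro error_term_le)
      (auto simp: n_def M_def fR_F \<theta>_def abs_mult K1_def K2_def l1_coeff_norm_nonneg less_imp_le)
  ultimately show ?thesis
    unfolding Re_exp_sum_eq_weight_cos_sum[of f N \<alpha> a, folded F_def]
    by (simp add: fR_F M_def n_def \<theta>_def mult_ac)
qed

theorem lemma12:
  fixes f :: "int poly" and r :: nat
  assumes "degree f = r" and "r \<ge> 3" and "lead_coeff f > 0"
    and "\<forall>x\<ge>0. fR f x > 0"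
    and "strict_mono_on {0..} (fR f)"
  shows "liminf (\<lambda>N. INF \<alpha>\<in>IN r N.
            ereal (Re (\<Sum>j=1..N. complex_of_real (gN f N (real j)) *
                   (e (\<alpha> * fR f (real j)) + e (- \<alpha> * fR f (real j)))))) \<ge> 0"
proof -
  define F where "F = map_poly real_of_int f"
  define K1 where "K1 = l1_coeff_norm (pderiv F)"
  define K2 where "K2 = l1_coeff_norm (pderiv (pderiv F))"
  define E where "E N = (32 * fR f 0 + 16 * K2 + 32 * K1\<^sup>2) / real N
      + 32 * pi * K1\<^sup>2 * real N powr (1 / real r - 1)" for N :: nat
  define S where "S N \<alpha> = Re (\<Sum>j=1..N. complex_of_real (gN f N (real j)) *
      (e (\<alpha> * fR f (real j)) + e (- \<alpha> * fR f (real j))))" for N \<alpha>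
  have "E \<longlonglongrightarrow> 0"
    unfolding E_def using assms(2)
    by (intro tendsto_add_zero lim_const_over_n tendsto_mult_right_zero tendsto_neg_powr
        filterlim_real_sequentially) (auto simp: field_simps)
  moreover have "eventually (\<lambda>N. \<forall>\<alpha>\<in>IN r N. - E N \<le> S N \<alpha>) sequentially"
  proof -
    have "degree F = r" "1 \<le> lead_coeff F" "fR f = poly F"
      using assms(1,3) by (simp_all add: F_def degree_map_poly coeff_map_poly fR_def fun_eq_iff)
    then have "eventually (\<lambda>x. 1 \<le> x \<and> 8 * fR f 0 \<le> x \<and> x ^ r \<le> 2 * fR f x) at_top"
      by (intro eventually_conj eventually_ge_at_top) (use eventually_power_le_twice_poly[of F] in auto)
    from eventually_compose_filterlim[OF this filterlim_real_sequentially] show ?thesis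
      by eventually_elim
        (use exp_sum_lower_bound[of f r] assms in \<open>auto simp: E_def S_def F_def K1_def K2_def\<close>)
  qed
  ultimately have "0 \<le> liminf (\<lambda>N. INF \<alpha>\<in>IN r N. ereal (S N \<alpha>))"
    by (rule liminf_INF_nonneg_of_uniform_bound)
  then show ?thesis by (simp add: S_def)
qed

end
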